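(* Let $X,Y$ be compact metric spaces, $(f_n)_{n\ge1}$ a sequence of continuous maps $X\to X$ and $(g_n)_{n\ge1}$ a sequence of continuous maps $Y\to Y$, and suppose there is a continuous surjection $h\colon X\to Y$ with $g_n\circ h=h\circ f_n$ for all $n$ (topological semi-conjugacy). Then $E(Y,g_{1,\infty})$ is a continuous image of $E(X,f_{1,\infty})$. If moreover $h$ is a homeomorphism, then $E(Y,g_{1,\infty})$ and $E(X,f_{1,\infty})$ are topologically isomorphic, i.e. there is a homeomorphism $H\colon E(X,f_{1,\infty})\to E(Y,g_{1,\infty})$ with $H(f_1^p)=g_1^p$ for every $p\in\beta(\mathbb{N})$.
   Context: $\mathbb{N}=\{1,2,\dots\}$, $\beta(\mathbb{N})$ the ultrafilters on $\mathbb{N}$ (principal ones identified with $n\in\mathbb{N}$), $\mathbb{N}^*$ the free ones. For $r\in\mathbb{N}^*$, $r\text{-}\lim_n x_n$ is the unique $y$ with $\{n:x_n\in V\}\in r$ for all neighbourhoods $V$ of $y$. $f_1^n=f_n\circ\cdots\circ f_1$, $f_1^r(x)=r\text{-}\lim_n f_1^n(x)$ for $r\in\mathbb{N}^*$, and $E(X,f_{1,\infty})$ is the closure of $\{f_1^n:n\in\mathbb{N}\}$ in $X^X$ with the pointwise topology (it equals $\{f_1^p:p\in\beta(\mathbb{N})\}$); similarly for $g$. The semigroup operation on these sets is $f_1^p\ast f_1^q:=f_1^{q+p}$, where $q+p=\{A:\{n:\{m:m+n\in A\}\in q\}\in p\}$, so an isomorphism is a homeomorphism compatible with this indexing. *)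

theory Defs
  imports "HOL-Analysis.Analysis"
begin

definition is_ultrafilter :: "'a filter \<Rightarrow> bool" where
  "is_ultrafilter F \<longleftrightarrow> F \<noteq> bot \<and> (\<forall>P. eventually P F \<or> eventually (\<lambda>x. \<not> P x) F)"

text \<open>beta(N) for N = {1,2,...}: ultrafilters on nat concentrated on {n. n >= 1};
  the principal ultrafilter at n is principal {n}.\<close>
definition beta_nat :: "nat filter set" where
  "beta_nat = {p. is_ultrafilter p \<and> eventually (\<lambda>n. 1 \<le> n) p}"

text \<open>f_1^n = f_n o ... o f_1 (f_1^0 = id is auxiliary; f 0 is unused).\<close>
fun iter_comp :: "(nat \<Rightarrow> 'a \<Rightarrow> 'a) \<Rightarrow> nat \<Rightarrow> 'a \<Rightarrow> 'a" where
  "iter_comp f 0 = id"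
| "iter_comp f (Suc n) = f (Suc n) \<circ> iter_comp f n"

text \<open>Pointwise (product) topology on X^X; maps are represented restricted to X.\<close>
definition pw_top :: "'a::topological_space set \<Rightarrow> ('a \<Rightarrow> 'a) topology" where
  "pw_top X = product_topology (\<lambda>_. top_of_set X) X"

definition enveloping :: "'a::topological_space set \<Rightarrow> (nat \<Rightarrow> 'a \<Rightarrow> 'a) \<Rightarrow> ('a \<Rightarrow> 'a) set" where
  "enveloping X f = pw_top X closure_of {restrict (iter_comp f n) X | n. 1 \<le> n}"

definition ulim_map :: "'a::t2_space set \<Rightarrow> (nat \<Rightarrow> 'a \<Rightarrow> 'a) \<Rightarrow> nat filter \<Rightarrow> ('a \<Rightarrow> 'a)" where
  "ulim_map X f p = restrict (\<lambda>x. Lim p (\<lambda>n. iter_comp f n x)) X"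

end

theory Submission
  imports Defs
begin

text \<open>Any right inverse s of h on Y turns an element \<phi> of X^X into h \<circ> \<phi> \<circ> s on Y. This
  transport is continuous for the pointwise topologies because each coordinate of its value
  is h applied to one coordinate of \<phi>. The semiconjugacy carries f_1^n to g_1^n, so the
  transport sends the generators of E(X, f) to those of E(Y, g). Compactness of X^X makes
  its image closed, so it maps E(X, f) onto E(Y, g). It commutes with ultrafilter limits
  because h is continuous and the limits exist by compactness of X. When h is a
  homeomorphism, transporting back along h^-1 inverts it.\<close>

definition conj_map :: "'b set \<Rightarrow> ('a \<Rightarrow> 'b) \<Rightarrow> ('b \<Rightarrow> 'a) \<Rightarrow> ('a \<Rightarrow> 'a) \<Rightarrow> ('b \<Rightarrow> 'b)" where
  "conj_map Y h s \<phi> = restrict (\<lambda>y. h (\<phi> (s y))) Y"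

lemma iter_comp_in:
  assumes "\<And>k. 1 \<le> k \<Longrightarrow> f k ` X \<subseteq> X" and "x \<in> X"
  shows "iter_comp f n x \<in> X"
  using assms by (induction n) auto

lemma iter_comp_semiconj:
  assumes "\<And>k. 1 \<le> k \<Longrightarrow> f k ` X \<subseteq> X"
    and "\<And>k z. 1 \<le> k \<Longrightarrow> z \<in> X \<Longrightarrow> g k (h z) = h (f k z)" and "x \<in> X"
  shows "iter_comp g n (h x) = h (iter_comp f n x)"
  using assms(3)
proof (induction n)
  case (Suc n)
  have "iter_comp f n x \<in> X" using iter_comp_in[of f X, OF assms(1) Suc.prems] .
  then show ?case using Suc assms(2)[of "Suc n"] by simp
qed simp

lemma semiconj_inverse:
  assumes "homeomorphism X Y h h'" and "\<And>k. 1 \<le> k \<Longrightarrow> f k ` X \<subseteq> X"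
    and "\<And>k x. 1 \<le> k \<Longrightarrow> x \<in> X \<Longrightarrow> g k (h x) = h (f k x)"
    and "1 \<le> k" and "y \<in> Y"
  shows "f k (h' y) = h' (g k y)"
proof -
  have "h' y \<in> X" using assms(1,5) homeomorphism_image2 by blast
  then have "f k (h' y) \<in> X" using assms(2,4) by blast
  then have "f k (h' y) = h' (h (f k (h' y)))" using homeomorphism_apply1[OF assms(1)] by simp
  also have "\<dots> = h' (g k (h (h' y)))" using assms(3,4) \<open>h' y \<in> X\<close> by simp
  also have "\<dots> = h' (g k y)" using homeomorphism_apply2[OF assms(1,5)] by simp
  finally show ?thesis .
qed

lemma topspace_pw_top: "topspace (pw_top X) = (\<Pi>\<^sub>E i\<in>X. X)"
  unfolding pw_top_def by simp

lemma compact_space_pw_top: "compact X \<Longrightarrow> compact_space (pw_top X)"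
  unfolding pw_top_def compact_space_product_topology
  by (simp add: compact_space_subtopology)

lemma Hausdorff_space_euclidean_t2: "Hausdorff_space (euclidean :: 'a::t2_space topology)"
  unfolding Hausdorff_space_def disjnt_def
  by (metis open_openin separation_t2)

lemma Hausdorff_space_pw_top: "Hausdorff_space (pw_top (X::'a::t2_space set))"
  unfolding pw_top_def Hausdorff_space_product_topology
  by (simp add: Hausdorff_space_subtopology Hausdorff_space_euclidean_t2)

lemma iter_comp_in_pw_top:
  assumes "\<And>n. 1 \<le> n \<Longrightarrow> f n ` X \<subseteq> X"
  shows "{restrict (iter_comp f n) X | n. 1 \<le> n} \<subseteq> topspace (pw_top X)"
  using iter_comp_in[of f X, OF assms] unfolding topspace_pw_top by auto

lemma continuous_map_conj_map:
  assumes "continuous_on X h" "h ` X \<subseteq> Y" "s ` Y \<subseteq> X"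
  shows "continuous_map (pw_top X) (pw_top Y) (conj_map Y h s)"
  unfolding continuous_map_componentwise pw_top_def[of Y]
proof (intro conjI ballI)
  show "conj_map Y h s ` topspace (pw_top X) \<subseteq> extensional Y"
    by (auto simp: conj_map_def)
next
  fix y assume "y \<in> Y"
  then have "s y \<in> X" using assms(3) by auto
  have "continuous_map (pw_top X) (top_of_set X) (\<lambda>\<phi>. \<phi> (s y))"
    unfolding pw_top_def using continuous_map_product_projection[OF \<open>s y \<in> X\<close>] .
  moreover have "continuous_map (top_of_set X) (top_of_set Y) h" using assms(1,2) by auto
  ultimately have "continuous_map (pw_top X) (top_of_set Y) (\<lambda>\<phi>. h (\<phi> (s y)))"
    using continuous_map_compose[unfolded o_def] by blast
  then show "continuous_map (pw_top X) (top_of_set Y) (\<lambda>\<phi>. conj_map Y h s \<phi> y)"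
    using \<open>y \<in> Y\<close> by (simp add: conj_map_def)
qed

lemma conj_map_iter_comp:
  assumes "\<And>k. 1 \<le> k \<Longrightarrow> f k ` X \<subseteq> X"
    and "\<And>k x. 1 \<le> k \<Longrightarrow> x \<in> X \<Longrightarrow> g k (h x) = h (f k x)"
    and "\<And>y. y \<in> Y \<Longrightarrow> s y \<in> X \<and> h (s y) = y"
  shows "conj_map Y h s (restrict (iter_comp f n) X) = restrict (iter_comp g n) Y"
proof
  fix y show "conj_map Y h s (restrict (iter_comp f n) X) y = restrict (iter_comp g n) Y y"
    using assms(3)[of y] iter_comp_semiconj[of f X g h, OF assms(1,2), of "s y" n]
    by (auto simp: conj_map_def)
qed

lemma conj_map_conj_map_inverse:
  assumes "\<And>x. x \<in> X \<Longrightarrow> h x \<in> Y \<and> s (h x) = x" and "\<phi> \<in> topspace (pw_top X)"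
  shows "conj_map X s h (conj_map Y h s \<phi>) = \<phi>"
proof
  fix x show "conj_map X s h (conj_map Y h s \<phi>) x = \<phi> x"
    using assms unfolding conj_map_def topspace_pw_top
    by (cases "x \<in> X") (auto simp: PiE_iff extensional_def)
qed

lemma image_enveloping:
  fixes X :: "'a::topological_space set" and Y :: "'b::t2_space set"
  assumes "compact X"
    and "\<And>n. 1 \<le> n \<Longrightarrow> f n ` X \<subseteq> X"
    and cont: "continuous_map (pw_top X) (pw_top Y) \<Phi>"
    and gen: "\<And>n. 1 \<le> n \<Longrightarrow> \<Phi> (restrict (iter_comp f n) X) = restrict (iter_comp g n) Y"
  shows "\<Phi> ` enveloping X f = enveloping Y g"
proof -
  let ?A = "{restrict (iter_comp f n) X | n. 1 \<le> n}"
  let ?B = "{restrict (iter_comp g n) Y | n. 1 \<le> n}"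
  have gens: "\<Phi> ` ?A = ?B"
    using gen by (force simp: image_iff)
  have "\<Phi> ` enveloping X f \<subseteq> pw_top Y closure_of (\<Phi> ` ?A)"
    unfolding enveloping_def by (rule continuous_map_image_closure_subset[OF cont])
  then have sub: "\<Phi> ` enveloping X f \<subseteq> enveloping Y g"
    unfolding gens enveloping_def[of Y] .
  have "compactin (pw_top X) (enveloping X f)"
    unfolding enveloping_def
    by (rule closedin_compact_space[OF compact_space_pw_top[OF assms(1)]]) simp
  then have "closedin (pw_top Y) (\<Phi> ` enveloping X f)"
    by (intro compactin_imp_closedin[OF Hausdorff_space_pw_top] image_compactin[OF _ cont])
  moreover have "?A \<subseteq> enveloping X f"
    unfolding enveloping_def by (rule closure_of_subset[OF iter_comp_in_pw_top[OF assms(2)]])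
  then have "?B \<subseteq> \<Phi> ` enveloping X f" using gens by blast
  ultimately have "enveloping Y g \<subseteq> \<Phi> ` enveloping X f"
    unfolding enveloping_def[of Y] by (intro closure_of_minimal)
  with sub show ?thesis by blast
qed

lemma continuous_map_enveloping:
  fixes X :: "'a::topological_space set" and Y :: "'b::t2_space set"
  assumes "compact X"
    and "\<And>k. 1 \<le> k \<Longrightarrow> f k ` X \<subseteq> X"
    and "continuous_on X h" and "h ` X \<subseteq> Y"
    and "\<And>k x. 1 \<le> k \<Longrightarrow> x \<in> X \<Longrightarrow> g k (h x) = h (f k x)"
    and "\<And>y. y \<in> Y \<Longrightarrow> s y \<in> X \<and> h (s y) = y"
  shows "continuous_map (subtopology (pw_top X) (enveloping X f))
           (subtopology (pw_top Y) (enveloping Y g)) (conj_map Y h s)"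
    and "conj_map Y h s ` enveloping X f = enveloping Y g"
proof -
  have cont: "continuous_map (pw_top X) (pw_top Y) (conj_map Y h s)"
    using continuous_map_conj_map[OF assms(3,4)] assms(6) by blast
  show image: "conj_map Y h s ` enveloping X f = enveloping Y g"
    using image_enveloping[OF assms(1,2) cont conj_map_iter_comp[OF assms(2,5,6)]] .
  show "continuous_map (subtopology (pw_top X) (enveloping X f))
          (subtopology (pw_top Y) (enveloping Y g)) (conj_map Y h s)"
    using image by (intro continuous_map_into_subtopology continuous_map_from_subtopology cont)
      auto
qed

lemma ultrafilter_tendsto_compact:
  fixes s :: "nat \<Rightarrow> 'a::topological_space"
  assumes "compact X" "is_ultrafilter p" "eventually (\<lambda>n. s n \<in> X) p"
  shows "\<exists>l\<in>X. (s \<longlongrightarrow> l) p"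
proof -
  have "filtermap s p \<noteq> bot"
    using assms(2) unfolding is_ultrafilter_def by (simp add: filtermap_bot_iff)
  moreover have "eventually (\<lambda>x. x \<in> X) (filtermap s p)"
    using assms(3) by (simp add: eventually_filtermap)
  ultimately obtain l where "l \<in> X" and cluster: "inf (nhds l) (filtermap s p) \<noteq> bot"
    using assms(1) unfolding compact_filter by blast
  have "(s \<longlongrightarrow> l) p"
    unfolding tendsto_def
  proof (intro allI impI)
    fix S assume "open S" "l \<in> S"
    show "eventually (\<lambda>n. s n \<in> S) p"
    proof (rule ccontr)
      assume "\<not> eventually (\<lambda>n. s n \<in> S) p"
      then have "eventually (\<lambda>n. s n \<notin> S) p"
        using assms(2) unfolding is_ultrafilter_def by blast
      then have "eventually (\<lambda>y. y \<notin> S) (filtermap s p)"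
        by (simp add: eventually_filtermap)
      moreover have "eventually (\<lambda>y. y \<in> S) (nhds l)"
        using \<open>open S\<close> \<open>l \<in> S\<close> eventually_nhds by blast
      ultimately have "eventually (\<lambda>_. False) (inf (nhds l) (filtermap s p))"
        unfolding eventually_inf by blast
      with cluster show False by (simp add: eventually_False)
    qed
  qed
  with \<open>l \<in> X\<close> show ?thesis by blast
qed

lemma continuous_on_Lim_ultrafilter:
  fixes s :: "nat \<Rightarrow> 'a::t2_space" and h :: "'a \<Rightarrow> 'b::t2_space"
  assumes "compact X" "continuous_on X h" "is_ultrafilter p"
    and "eventually (\<lambda>n. s n \<in> X) p"
  shows "h (Lim p s) = Lim p (\<lambda>n. h (s n))"
proof -
  obtain l where "l \<in> X" and l: "(s \<longlongrightarrow> l) p"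
    using ultrafilter_tendsto_compact[OF assms(1,3,4)] by blast
  have "p \<noteq> bot" using assms(3) unfolding is_ultrafilter_def by blast
  moreover have "((\<lambda>n. h (s n)) \<longlongrightarrow> h l) p"
    using continuous_on_tendsto_compose[OF assms(2) l \<open>l \<in> X\<close> assms(4)] .
  ultimately show ?thesis using l tendsto_Lim by metis
qed

lemma conj_map_ulim_map:
  fixes X :: "'a::t2_space set" and Y :: "'b::t2_space set"
  assumes "compact X" "\<And>k. 1 \<le> k \<Longrightarrow> f k ` X \<subseteq> X" "continuous_on X h"
    and "\<And>k x. 1 \<le> k \<Longrightarrow> x \<in> X \<Longrightarrow> g k (h x) = h (f k x)"
    and "\<And>y. y \<in> Y \<Longrightarrow> s y \<in> X \<and> h (s y) = y"
    and "is_ultrafilter p"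
  shows "conj_map Y h s (ulim_map X f p) = ulim_map Y g p"
proof
  fix y show "conj_map Y h s (ulim_map X f p) y = ulim_map Y g p y"
  proof (cases "y \<in> Y")
    case True
    then have "s y \<in> X" and "h (s y) = y" using assms(5) by auto
    then have "(\<lambda>n. iter_comp g n y) = (\<lambda>n. h (iter_comp f n (s y)))"
      using iter_comp_semiconj[of f X g h, OF assms(2,4)] by metis
    then have "h (Lim p (\<lambda>n. iter_comp f n (s y))) = Lim p (\<lambda>n. iter_comp g n y)"
      using continuous_on_Lim_ultrafilter[OF assms(1,3,6)] iter_comp_in[of f X, OF assms(2)]
        \<open>s y \<in> X\<close> by simp
    with True \<open>s y \<in> X\<close> show ?thesis by (simp add: conj_map_def ulim_map_def)
  qed (simp add: conj_map_def ulim_map_def)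
qed

lemma homeomorphic_map_enveloping:
  fixes X :: "'a::t2_space set" and Y :: "'b::t2_space set"
  assumes "compact X" "compact Y" "homeomorphism X Y h h'"
    and fX: "\<And>k. 1 \<le> k \<Longrightarrow> f k ` X \<subseteq> X" and gY: "\<And>k. 1 \<le> k \<Longrightarrow> g k ` Y \<subseteq> Y"
    and semiconj: "\<And>k x. 1 \<le> k \<Longrightarrow> x \<in> X \<Longrightarrow> g k (h x) = h (f k x)"
  shows "homeomorphic_map (subtopology (pw_top X) (enveloping X f))
           (subtopology (pw_top Y) (enveloping Y g)) (conj_map Y h h')"
proof (rule homeomorphic_maps_imp_map)
  have hX: "h ` X = Y" "continuous_on X h" and h'Y: "h' ` Y = X" "continuous_on Y h'"
    using homeomorphism_image1 homeomorphism_cont1 homeomorphism_image2 homeomorphism_cont2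
      assms(3) by blast+
  have h'h: "\<And>x. x \<in> X \<Longrightarrow> h x \<in> Y \<and> h' (h x) = x"
    using hX(1) homeomorphism_apply1[OF assms(3)] by blast
  have hh': "\<And>y. y \<in> Y \<Longrightarrow> h' y \<in> X \<and> h (h' y) = y"
    using h'Y(1) homeomorphism_apply2[OF assms(3)] by blast
  have semiconj': "\<And>k y. 1 \<le> k \<Longrightarrow> y \<in> Y \<Longrightarrow> f k (h' y) = h' (g k y)"
    using semiconj_inverse[of X Y h h' f g, OF assms(3) fX semiconj] .
  note forward = continuous_map_enveloping[of X f h Y g h',
      OF assms(1) fX hX(2) equalityD1[OF hX(1)] semiconj hh']
  note backward = continuous_map_enveloping[of Y g h' X f h,
      OF assms(2) gY h'Y(2) equalityD1[OF h'Y(1)] semiconj' h'h]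
  show "homeomorphic_maps (subtopology (pw_top X) (enveloping X f))
          (subtopology (pw_top Y) (enveloping Y g)) (conj_map Y h h') (conj_map X h' h)"
    unfolding homeomorphic_maps_def
  proof (intro conjI ballI)
    show "continuous_map (subtopology (pw_top X) (enveloping X f))
            (subtopology (pw_top Y) (enveloping Y g)) (conj_map Y h h')"
      using forward(1) hX(1) h'Y(1) by blast
    show "continuous_map (subtopology (pw_top Y) (enveloping Y g))
            (subtopology (pw_top X) (enveloping X f)) (conj_map X h' h)"
      using backward(1) hX(1) h'Y(1) by blast
  next
    fix \<phi> assume "\<phi> \<in> topspace (subtopology (pw_top X) (enveloping X f))"
    then show "conj_map X h' h (conj_map Y h h' \<phi>) = \<phi>"
      using conj_map_conj_map_inverse[of X h Y h'] h'h by simp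
  next
    fix \<psi> assume "\<psi> \<in> topspace (subtopology (pw_top Y) (enveloping Y g))"
    then show "conj_map Y h h' (conj_map X h' h \<psi>) = \<psi>"
      using conj_map_conj_map_inverse[of Y h' X h] hh' by simp
  qed
qed

theorem theorem3p16:
  fixes X :: "'a::metric_space set" and Y :: "'b::metric_space set"
    and f :: "nat \<Rightarrow> 'a \<Rightarrow> 'a" and g :: "nat \<Rightarrow> 'b \<Rightarrow> 'b" and h :: "'a \<Rightarrow> 'b"
  assumes "compact X" and "compact Y"
    and "\<And>n. 1 \<le> n \<Longrightarrow> continuous_on X (f n) \<and> f n ` X \<subseteq> X"
    and "\<And>n. 1 \<le> n \<Longrightarrow> continuous_on Y (g n) \<and> g n ` Y \<subseteq> Y"
    and "continuous_on X h" and "h ` X = Y"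
    and "\<And>n x. 1 \<le> n \<Longrightarrow> x \<in> X \<Longrightarrow> g n (h x) = h (f n x)"
  shows "(\<exists>\<Phi>. continuous_map (subtopology (pw_top X) (enveloping X f))
                               (subtopology (pw_top Y) (enveloping Y g)) \<Phi>
             \<and> \<Phi> ` enveloping X f = enveloping Y g)
       \<and> ((\<exists>h'. homeomorphism X Y h h') \<longrightarrow>
          (\<exists>H. homeomorphic_map (subtopology (pw_top X) (enveloping X f))
                                 (subtopology (pw_top Y) (enveloping Y g)) H
               \<and> (\<forall>p\<in>beta_nat. H (ulim_map X f p) = ulim_map Y g p)))"
proof (intro conjI impI)
  have fX: "\<And>n. 1 \<le> n \<Longrightarrow> f n ` X \<subseteq> X" and gY: "\<And>n. 1 \<le> n \<Longrightarrow> g n ` Y \<subseteq> Y"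
    using assms(3,4) by auto
  have "\<And>y. y \<in> Y \<Longrightarrow> inv_into X h y \<in> X \<and> h (inv_into X h y) = y"
    using assms(6) by (auto intro: inv_into_into f_inv_into_f)
  then show "\<exists>\<Phi>. continuous_map (subtopology (pw_top X) (enveloping X f))
                    (subtopology (pw_top Y) (enveloping Y g)) \<Phi> \<and> \<Phi> ` enveloping X f = enveloping Y g"
    using continuous_map_enveloping[of X f h Y g "inv_into X h",
        OF assms(1) fX assms(5) equalityD1[OF assms(6)] assms(7)] by blast
  assume "\<exists>h'. homeomorphism X Y h h'"
  then obtain h' where hom: "homeomorphism X Y h h'" by blast
  then have "\<And>y. y \<in> Y \<Longrightarrow> h' y \<in> X \<and> h (h' y) = y"
    using homeomorphism_image2 homeomorphism_apply2 by blast
  then have "\<forall>p\<in>beta_nat. conj_map Y h h' (ulim_map X f p) = ulim_map Y g p"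
    using conj_map_ulim_map[of X f h g Y h', OF assms(1) fX assms(5,7)] by (simp add: beta_nat_def)
  with homeomorphic_map_enveloping[of X Y h h' f g, OF assms(1,2) hom fX gY assms(7)]
  show "\<exists>H. homeomorphic_map (subtopology (pw_top X) (enveloping X f))
          (subtopology (pw_top Y) (enveloping Y g)) H
        \<and> (\<forall>p\<in>beta_nat. H (ulim_map X f p) = ulim_map Y g p)" by blast
qed

end
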